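(* Let $E\subset[0,1)$ be a measurable set of positive Lebesgue measure and let $T\in\mathrm{IET}$. Then there exist $x_0\in[0,1)$ and constants $\alpha>0$, $\beta>0$ such that for all $n\geq 1$, $$\#\{i : 0\leq i<n,\ T^i(x_0)\in E\}\geq \alpha n-\beta.$$
   Context: $\mathrm{IET}$ denotes the group of interval exchange transformations of $[0,1)$: bijections of $[0,1)$ that are orientation-preserving piecewise isometries (piecewise translations), left-continuous, with finitely many discontinuity points. *)

theory Defs
  imports "HOL-Analysis.Analysis"
begin

definition IET :: "(real \<Rightarrow> real) \<Rightarrow> bool" where
  "IET T \<longleftrightarrow> bij_betw T {0..<1} {0..<1} \<and>
     (\<exists>D::real set. finite D \<and>
        (\<forall>a b. a < b \<and> {a..<b} \<subseteq> {0..<1} \<and> D \<inter> {a<..<b} = {} \<longrightarrow>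
           (\<exists>c. \<forall>x\<in>{a..<b}. T x = x + c)))"

end

theory Submission
  imports Defs "HOL-Probability.Probability_Measure"
begin

(* An interval exchange transformation permutes finitely many intervals by translations,
   so it preserves Lebesgue measure on [0,1). For any measure-preserving map T of a
   probability space and any 0 <= alpha < mu(E), some point x visits E at least alpha*n times
   among x, T x, ..., T^(n-1) x, for every n. Otherwise every orbit begins with a segment of
   some length n visiting E fewer than alpha*n times, and the sets G_N of points admitting no
   such segment of length at most N shrink to the empty set. Cutting the first L steps of an
   orbit greedily into such short segments, stepping over the times spent in G_N one at a time,
   and integrating gives L mu(E) <= alpha L + N + L mu(G_N), which fails once mu(G_N) is small
   and L is large. *)

definition measure_preserving_map :: "'a measure \<Rightarrow> ('a \<Rightarrow> 'a) \<Rightarrow> bool" where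
  "measure_preserving_map M T \<longleftrightarrow>
     T \<in> M \<rightarrow>\<^sub>M M \<and> (\<forall>A\<in>sets M. emeasure M (T -` A \<inter> space M) = emeasure M A)"

lemma measurable_funpow: "T \<in> M \<rightarrow>\<^sub>M M \<Longrightarrow> T ^^ n \<in> M \<rightarrow>\<^sub>M M"
  by (induction n) (auto intro: measurable_comp)

lemma measure_preserving_map_funpow:
  assumes "measure_preserving_map M T"
  shows "measure_preserving_map M (T ^^ n)"
proof (induction n)
  case 0
  show ?case by (simp add: measure_preserving_map_def Int_absorb1 sets.sets_into_space)
next
  case (Suc n)
  have T: "T \<in> M \<rightarrow>\<^sub>M M" "\<forall>A\<in>sets M. emeasure M (T -` A \<inter> space M) = emeasure M A"
    using assms by (auto simp: measure_preserving_map_def)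
  have Tn: "T ^^ n \<in> M \<rightarrow>\<^sub>M M"
    "\<forall>A\<in>sets M. emeasure M ((T ^^ n) -` A \<inter> space M) = emeasure M A"
    using Suc by (auto simp: measure_preserving_map_def)
  have preimage: "(T ^^ Suc n) -` A \<inter> space M = T -` ((T ^^ n) -` A \<inter> space M) \<inter> space M" for A
    using measurable_space[OF T(1)] by (auto simp: funpow_swap1)
  have "T ^^ Suc n \<in> M \<rightarrow>\<^sub>M M"
    using measurable_comp[OF Tn(1) T(1)] by simp
  moreover have "emeasure M ((T ^^ Suc n) -` A \<inter> space M) = emeasure M A" if "A \<in> sets M" for A
    unfolding preimage
    using T(2)[rule_format, OF measurable_sets[OF Tn(1) that]] Tn(2)[rule_format, OF that]
    by (simp only:)
  ultimately show ?case unfolding measure_preserving_map_def by blast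
qed

definition visits :: "('a \<Rightarrow> 'a) \<Rightarrow> 'a set \<Rightarrow> 'a \<Rightarrow> nat \<Rightarrow> nat" where
  "visits T E x n = card {i. i < n \<and> (T ^^ i) x \<in> E}"

lemma visits_eq_sum_indicator:
  "real (visits T E x n) = (\<Sum>i<n. indicator E ((T ^^ i) x))"
proof -
  have "{i. i < n \<and> (T ^^ i) x \<in> E} = {..<n} \<inter> {i. (T ^^ i) x \<in> E}" by auto
  then show ?thesis
    by (simp add: visits_def sum_indicator_eq_card indicator_def)
qed

lemma visits_funpow:
  "real (visits T E ((T ^^ k) x) n) = (\<Sum>i\<in>{k..<k+n}. indicator E ((T ^^ i) x))"
proof -
  have "(\<Sum>i\<in>{k..<k+n}. indicator E ((T ^^ i) x)) =
      (\<Sum>i<n. indicator E ((T ^^ (i + k)) x) :: real)"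
    using sum.shift_bounds_nat_ivl[of "\<lambda>i. indicator E ((T ^^ i) x)" 0 k n]
    by (simp add: lessThan_atLeast0 add.commute)
  then show ?thesis
    by (simp add: visits_eq_sum_indicator funpow_add)
qed

lemma sum_le_by_short_blocks:
  fixes a :: "nat \<Rightarrow> real" and \<alpha> :: real and G :: "nat set"
  assumes a_le_1: "\<And>i. a i \<le> 1" and "0 \<le> \<alpha>"
    and short_block: "\<And>i. i \<notin> G \<Longrightarrow> \<exists>n\<in>{1..N}. (\<Sum>j\<in>{i..<i+n}. a j) \<le> \<alpha> * real n"
  shows "(\<Sum>i\<in>{k..<L}. a i) \<le> \<alpha> * real (L - k) + real N + real (card ({k..<L} \<inter> G))"
proof (induction k rule: measure_induct_rule[of "\<lambda>k. L - k"])
  case (less k)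
  show ?case
  proof (cases "k < L")
    case False
    then show ?thesis by simp
  next
    case True
    then have split_first: "{k..<L} = insert k {Suc k..<L}" by auto
    show ?thesis
    proof (cases "k \<in> G")
      case True
      have "{k..<L} \<inter> G = insert k ({Suc k..<L} \<inter> G)" using True split_first by auto
      then have "card ({k..<L} \<inter> G) = Suc (card ({Suc k..<L} \<inter> G))" by simp
      moreover have "(\<Sum>i\<in>{Suc k..<L}. a i) \<le>
          \<alpha> * real (L - Suc k) + real N + real (card ({Suc k..<L} \<inter> G))"
        using less[of "Suc k"] \<open>k < L\<close> by simp
      moreover have "\<alpha> * real (L - Suc k) \<le> \<alpha> * real (L - k)"
        using \<open>0 \<le> \<alpha>\<close> by (intro mult_left_mono) auto
      ultimately show ?thesis using a_le_1[of k] split_first by simp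
    next
      case False
      then obtain n where n: "1 \<le> n" "n \<le> N" "(\<Sum>j\<in>{k..<k+n}. a j) \<le> \<alpha> * real n"
        using short_block[OF False] by auto
      show ?thesis
      proof (cases "k + n \<le> L")
        case True
        have IH: "(\<Sum>i\<in>{k+n..<L}. a i) \<le>
            \<alpha> * real (L - (k + n)) + real N + real (card ({k+n..<L} \<inter> G))"
          using less[of "k + n"] n(1) \<open>k < L\<close> by simp
        have "(\<Sum>i\<in>{k..<L}. a i) = (\<Sum>i\<in>{k..<k+n}. a i) + (\<Sum>i\<in>{k+n..<L}. a i)"
          using True by (simp add: sum.atLeastLessThan_concat)
        moreover have "card ({k+n..<L} \<inter> G) \<le> card ({k..<L} \<inter> G)"
          by (intro card_mono) auto
        moreover have "\<alpha> * real (L - k) = \<alpha> * real n + \<alpha> * real (L - (k + n))"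
          using True by (simp add: of_nat_diff distrib_left[symmetric])
        ultimately show ?thesis using IH n(3) by linarith
      next
        case False
        have "(\<Sum>i\<in>{k..<L}. a i) \<le> real (card {k..<L})"
          using sum_bounded_above[of "{k..<L}" a 1] a_le_1 by simp
        also have "\<dots> \<le> real N" using False n by simp
        finally have "(\<Sum>i\<in>{k..<L}. a i) \<le> real N" .
        moreover have "0 \<le> \<alpha> * real (L - k)" using \<open>0 \<le> \<alpha>\<close> by simp
        ultimately show ?thesis by linarith
      qed
    qed
  qed
qed

lemma borel_measurable_visits:
  assumes "T \<in> M \<rightarrow>\<^sub>M M" "E \<in> sets M"
  shows "(\<lambda>x. real (visits T E x n)) \<in> borel_measurable M"
  unfolding visits_eq_sum_indicator using assms
  by (intro borel_measurable_sum measurable_compose[OF measurable_funpow borel_measurable_indicator])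

context prob_space
begin

lemma visits_integrable_expectation:
  assumes T: "measure_preserving_map M T" and A: "A \<in> events"
  shows "integrable M (\<lambda>x. real (visits T A x n))"
    and "expectation (\<lambda>x. real (visits T A x n)) = n * prob A"
proof -
  have pres: "measure_preserving_map M (T ^^ i)" for i
    using T by (rule measure_preserving_map_funpow)
  let ?B = "\<lambda>i. (T ^^ i) -` A \<inter> space M"
  have B: "?B i \<in> events" "prob (?B i) = prob A" for i
    using pres[of i] A by (auto simp: measure_preserving_map_def measure_def)
  have visits_eq: "real (visits T A x n) = (\<Sum>i<n. indicator (?B i) x)" if "x \<in> space M" for x
    using that by (simp add: visits_eq_sum_indicator indicator_def)
  have "integrable M (\<lambda>x. \<Sum>i<n. indicator (?B i) x :: real)"
    using B(1) by (intro Bochner_Integration.integrable_sum)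
      (simp add: integrable_indicator_iff Int_absorb2 less_top[symmetric])
  moreover have "integrable M (\<lambda>x. \<Sum>i<n. indicator (?B i) x :: real) \<longleftrightarrow>
      integrable M (\<lambda>x. real (visits T A x n))"
    by (rule Bochner_Integration.integrable_cong) (simp_all add: visits_eq)
  ultimately show "integrable M (\<lambda>x. real (visits T A x n))" by simp
  have "expectation (\<lambda>x. real (visits T A x n)) = expectation (\<lambda>x. \<Sum>i<n. indicator (?B i) x)"
    by (rule Bochner_Integration.integral_cong[OF refl visits_eq])
  also have "\<dots> = (\<Sum>i<n. prob (?B i))"
    using B(1) by (subst Bochner_Integration.integral_sum)
      (simp_all add: integrable_indicator_iff Int_absorb2 less_top[symmetric])
  finally show "expectation (\<lambda>x. real (visits T A x n)) = n * prob A"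
    using B(2) by simp
qed

lemma exists_visits_ge_linear:
  fixes \<alpha> :: real
  assumes T: "measure_preserving_map M T" and E: "E \<in> events"
    and "0 \<le> \<alpha>" and "\<alpha> < prob E"
  shows "\<exists>x\<in>space M. \<forall>n. \<alpha> * real n \<le> real (visits T E x n)"
proof (rule ccontr)
  assume "\<not> ?thesis"
  then have some_short: "\<exists>n. real (visits T E x n) < \<alpha> * n" if "x \<in> space M" for x
    using that by (auto simp: not_le)
  have T_meas: "T \<in> M \<rightarrow>\<^sub>M M" using T by (simp add: measure_preserving_map_def)
  have funpow_space: "(T ^^ i) x \<in> space M" if "x \<in> space M" for i x
    using measurable_space[OF measurable_funpow[OF T_meas] that] .
  define G where "G N = {x\<in>space M. \<forall>n\<in>{..N}. \<alpha> * real n \<le> real (visits T E x n)}" for N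
  have G_events: "G N \<in> events" for N
    unfolding G_def using borel_measurable_visits[OF T_meas E]
    by (intro sets.sets_Collect_finite_All borel_measurable_le) auto
  have "decseq G" unfolding G_def decseq_def by auto
  moreover have "(\<Inter>N. G N) = {}"
  proof (intro equals0I)
    fix x assume "x \<in> (\<Inter>N. G N)"
    then have "x \<in> space M" and in_G: "x \<in> G n" for n by (auto simp: G_def)
    then obtain n where "real (visits T E x n) < \<alpha> * n" using some_short by blast
    moreover have "\<alpha> * n \<le> real (visits T E x n)" using in_G[of n] by (simp add: G_def)
    ultimately show False by simp
  qed
  ultimately have "(\<lambda>N. prob (G N)) \<longlonglongrightarrow> 0"
    using finite_Lim_measure_decseq[of G] G_events by auto
  define \<delta> where "\<delta> = (prob E - \<alpha>) / 2"
  have "\<delta> > 0" using \<open>\<alpha> < prob E\<close> by (simp add: \<delta>_def)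
  with \<open>(\<lambda>N. prob (G N)) \<longlonglongrightarrow> 0\<close> have "eventually (\<lambda>N. prob (G N) < \<delta>) sequentially"
    by (rule order_tendstoD(2))
  then obtain N where N: "prob (G N) < \<delta>" by (auto simp: eventually_sequentially)
  obtain L :: nat where L: "real N < real L * \<delta>"
    using ex_less_of_nat_mult[OF \<open>\<delta> > 0\<close>] by blast
  have pointwise: "real (visits T E x L) \<le> \<alpha> * L + N + real (visits T (G N) x L)"
    if x: "x \<in> space M" for x
  proof -
    have "(\<Sum>i\<in>{0..<L}. indicator E ((T ^^ i) x)) \<le>
        \<alpha> * real (L - 0) + real N + real (card ({0..<L} \<inter> {i. (T ^^ i) x \<in> G N}))"
    proof (rule sum_le_by_short_blocks)
      fix i assume "i \<notin> {i. (T ^^ i) x \<in> G N}"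
      then obtain n where "n \<le> N" "real (visits T E ((T ^^ i) x) n) < \<alpha> * n"
        using funpow_space[OF x] by (auto simp: G_def not_le)
      moreover from this have "n \<noteq> 0" by (intro notI) simp
      ultimately show "\<exists>n\<in>{1..N}. (\<Sum>j\<in>{i..<i+n}. indicator E ((T ^^ j) x)) \<le> \<alpha> * real n"
        by (intro bexI[of _ n]) (auto simp: visits_funpow)
    qed (auto simp: indicator_def \<open>0 \<le> \<alpha>\<close>)
    moreover have "real (visits T E x L) = (\<Sum>i\<in>{0..<L}. indicator E ((T ^^ i) x))"
      by (simp add: visits_eq_sum_indicator lessThan_atLeast0)
    moreover have "{0..<L} \<inter> {i. (T ^^ i) x \<in> G N} = {i. i < L \<and> (T ^^ i) x \<in> G N}" by auto
    ultimately show ?thesis by (simp add: visits_def)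
  qed
  note visits_E = visits_integrable_expectation[OF T E, of L]
    and visits_G = visits_integrable_expectation[OF T G_events[of N], of L]
  have "expectation (\<lambda>x. real (visits T E x L)) \<le>
      expectation (\<lambda>x. (\<alpha> * L + N) + real (visits T (G N) x L))"
    using visits_E visits_G pointwise by (intro integral_mono) auto
  also have "\<dots> = \<alpha> * L + N + L * prob (G N)"
    using visits_G by (simp add: Bochner_Integration.integral_add prob_space)
  finally have "L * prob E \<le> \<alpha> * L + N + L * prob (G N)"
    using visits_E by simp
  moreover have "L * prob (G N) \<le> L * \<delta>" using N by (intro mult_left_mono) auto
  moreover have "real L * \<delta> * 2 = real L * prob E - \<alpha> * real L"
    by (simp add: \<delta>_def field_simps)
  ultimately show False using L by linarith
qed

end

lemma emeasure_lebesgue_translation: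
  fixes a :: "'a::euclidean_space"
  shows "emeasure lebesgue ((+) a ` S) = emeasure lebesgue S"
  using emeasure_lebesgue_affine[of 1 a S] by (simp add: ac_simps cong: image_cong_simp)

lemma piecewise_translation_preserves_lebesgue:
  fixes T :: "'a::euclidean_space \<Rightarrow> 'a"
  assumes bij: "bij_betw T \<Omega> \<Omega>"
    and \<P>: "finite \<P>" "disjoint \<P>" "\<Union>\<P> = \<Omega>" "\<P> \<subseteq> sets lebesgue"
    and translation: "\<forall>I\<in>\<P>. \<exists>c. \<forall>x\<in>I. T x = c + x"
    and A: "A \<in> sets lebesgue" "A \<subseteq> \<Omega>"
  shows "{x\<in>\<Omega>. T x \<in> A} \<in> sets lebesgue"
    and "emeasure lebesgue {x\<in>\<Omega>. T x \<in> A} = emeasure lebesgue A"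
proof -
  obtain c where c: "\<And>I x. I \<in> \<P> \<Longrightarrow> x \<in> I \<Longrightarrow> T x = c I + x"
    using translation by metis
  define F where "F I = {x\<in>I. T x \<in> A}" for I
  define H where "H I = A \<inter> T ` I" for I
  have H_eq: "H I = (+) (c I) ` F I" and F_eq: "F I = (+) (- c I) ` H I" if "I \<in> \<P>" for I
    using c[OF that] by (force simp: F_def H_def)+
  have H_sets: "H I \<in> sets lebesgue" if "I \<in> \<P>" for I
  proof -
    have "T ` I = (+) (c I) ` I" using c[OF that] by force
    moreover have "I \<in> sets lebesgue" using \<P>(4) that by blast
    ultimately show ?thesis
      unfolding H_def using A(1) by (simp add: lebesgue_sets_translation sets.Int)
  qed
  have F_sets: "F I \<in> sets lebesgue" if "I \<in> \<P>" for I
    unfolding F_eq[OF that] by (rule lebesgue_sets_translation[OF H_sets[OF that]])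
  have "disjoint_family_on H \<P>"
    unfolding disjoint_family_on_def
  proof (intro ballI impI)
    fix I J assume "I \<in> \<P>" "J \<in> \<P>" "I \<noteq> J"
    then have "I \<inter> J = {}" "I \<subseteq> \<Omega>" "J \<subseteq> \<Omega>" using \<P>(2,3) by (auto dest: disjointD)
    then have "T ` I \<inter> T ` J = {}"
      using inj_on_image_Int[OF bij_betw_imp_inj_on[OF bij]] by (metis image_empty)
    then show "H I \<inter> H J = {}" by (auto simp: H_def)
  qed
  have "disjoint_family_on F \<P>"
    using \<P>(2) by (auto simp: disjoint_family_on_def F_def dest: disjointD)
  have preimage_eq: "{x\<in>\<Omega>. T x \<in> A} = (\<Union>I\<in>\<P>. F I)" using \<P>(3) by (auto simp: F_def)
  then show "{x\<in>\<Omega>. T x \<in> A} \<in> sets lebesgue" using F_sets \<P>(1) by auto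
  have "emeasure lebesgue {x\<in>\<Omega>. T x \<in> A} = (\<Sum>I\<in>\<P>. emeasure lebesgue (F I))"
    unfolding preimage_eq using F_sets \<open>disjoint_family_on F \<P>\<close> \<P>(1)
    by (intro sum_emeasure[symmetric]) auto
  also have "\<dots> = (\<Sum>I\<in>\<P>. emeasure lebesgue (H I))"
    by (intro sum.cong refl) (metis H_eq emeasure_lebesgue_translation)
  also have "\<dots> = emeasure lebesgue (\<Union>I\<in>\<P>. H I)"
    using H_sets \<open>disjoint_family_on H \<P>\<close> \<P>(1) by (intro sum_emeasure) auto
  also have "(\<Union>I\<in>\<P>. H I) = A"
    using \<P>(3) A(2) bij_betw_imp_surj_on[OF bij] unfolding H_def image_Union[symmetric] by blast
  finally show "emeasure lebesgue {x\<in>\<Omega>. T x \<in> A} = emeasure lebesgue A" .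
qed

lemma finite_cut_points_partition:
  fixes Q :: "real set"
  assumes "finite Q" "a \<in> Q" "b \<in> Q" "Q \<subseteq> {a..b}"
  obtains nxt where "\<And>d. d \<in> Q - {b} \<Longrightarrow> d < nxt d \<and> nxt d \<in> Q \<and> Q \<inter> {d<..<nxt d} = {}"
    and "disjoint_family_on (\<lambda>d. {d..<nxt d}) (Q - {b})"
    and "(\<Union>d\<in>Q - {b}. {d..<nxt d}) = {a..<b}"
proof
  define nxt where "nxt d = Min {e\<in>Q. d < e}" for d
  show nxt: "d < nxt d \<and> nxt d \<in> Q \<and> Q \<inter> {d<..<nxt d} = {}" if "d \<in> Q - {b}" for d
  proof -
    have "b \<in> {e\<in>Q. d < e}" using that assms(3,4) by force
    then have "nxt d \<in> {e\<in>Q. d < e}" unfolding nxt_def using assms(1) by (intro Min_in) auto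
    moreover have "nxt d \<le> e" if "e \<in> Q" "d < e" for e
      unfolding nxt_def using assms(1) that by (intro Min_le) auto
    ultimately show ?thesis by force
  qed
  have nxt_le: "nxt d \<le> e" if "d \<in> Q - {b}" "e \<in> Q" "d < e" for d e
    using nxt[OF that(1)] that(2,3) by (meson disjoint_iff greaterThanLessThan_iff not_le)
  show "disjoint_family_on (\<lambda>d. {d..<nxt d}) (Q - {b})"
    unfolding disjoint_family_on_def
  proof (intro ballI impI)
    fix d e assume de: "d \<in> Q - {b}" "e \<in> Q - {b}" "d \<noteq> e"
    then consider "d < e" | "e < d" by linarith
    then show "{d..<nxt d} \<inter> {e..<nxt e} = {}"
      by cases (use nxt_le de in force)+
  qed
  show "(\<Union>d\<in>Q - {b}. {d..<nxt d}) = {a..<b}"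
  proof
    show "(\<Union>d\<in>Q - {b}. {d..<nxt d}) \<subseteq> {a..<b}"
      using nxt assms(4) by fastforce
    show "{a..<b} \<subseteq> (\<Union>d\<in>Q - {b}. {d..<nxt d})"
    proof
      fix x assume x: "x \<in> {a..<b}"
      define d where "d = Max {e\<in>Q. e \<le> x}"
      have "d \<in> {e\<in>Q. e \<le> x}" unfolding d_def using assms(1,2) x by (intro Max_in) auto
      then have d: "d \<in> Q - {b}" "d \<le> x" using x by auto
      have d_max: "e \<le> d" if "e \<in> Q" "e \<le> x" for e
        unfolding d_def using assms(1) that by (intro Max_ge) auto
      have "x < nxt d"
      proof (rule ccontr)
        assume "\<not> x < nxt d"
        then have "nxt d \<le> d" using d_max nxt[OF d(1)] by simp
        then show False using nxt[OF d(1)] by simp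
      qed
      then show "x \<in> (\<Union>d\<in>Q - {b}. {d..<nxt d})" using d by auto
    qed
  qed
qed

lemma IET_piecewise_translation:
  assumes "IET T"
  obtains \<P> where "finite \<P>" "disjoint \<P>" "\<Union>\<P> = {0..<1}" "\<P> \<subseteq> sets lebesgue"
    and "\<forall>I\<in>\<P>. \<exists>c. \<forall>x\<in>I. T x = c + x"
proof -
  obtain D :: "real set" where "finite D" and translation_between_cuts:
    "\<And>a b. a < b \<Longrightarrow> {a..<b} \<subseteq> {0..<1} \<Longrightarrow> D \<inter> {a<..<b} = {} \<Longrightarrow> \<exists>c. \<forall>x\<in>{a..<b}. T x = x + c"
    using assms unfolding IET_def by blast
  define Q where "Q = {0, 1} \<union> D \<inter> {0<..<1}"
  have "finite Q" "0 \<in> Q" "1 \<in> Q" "Q \<subseteq> {0..1}"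
    using \<open>finite D\<close> by (auto simp: Q_def)
  from finite_cut_points_partition[OF this] obtain nxt
    where nxt: "\<And>d. d \<in> Q - {1} \<Longrightarrow> d < nxt d \<and> nxt d \<in> Q \<and> Q \<inter> {d<..<nxt d} = {}"
    and disj: "disjoint_family_on (\<lambda>d. {d..<nxt d}) (Q - {1})"
    and cover: "(\<Union>d\<in>Q - {1}. {d..<nxt d}) = {0..<1}"
    by blast
  define \<P> where "\<P> = (\<lambda>d. {d..<nxt d}) ` (Q - {1})"
  have "\<forall>I\<in>\<P>. \<exists>c. \<forall>x\<in>I. T x = c + x"
  proof
    fix I assume "I \<in> \<P>"
    then obtain d where d: "d \<in> Q - {1}" and I: "I = {d..<nxt d}" by (auto simp: \<P>_def)
    have sub: "{d..<nxt d} \<subseteq> {0..<1}" using cover d by blast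
    have "D \<inter> {d<..<nxt d} \<subseteq> Q \<inter> {d<..<nxt d}"
      using sub nxt[OF d] by (auto simp: Q_def)
    then obtain c where "\<forall>x\<in>{d..<nxt d}. T x = x + c"
      using translation_between_cuts[OF _ sub] nxt[OF d] by auto
    then show "\<exists>c. \<forall>x\<in>I. T x = c + x" unfolding I by (metis add.commute)
  qed
  moreover have "disjoint \<P>"
    unfolding \<P>_def using disj by (rule disjoint_family_on_disjoint_image)
  moreover have "finite \<P>" "\<Union>\<P> = {0..<1}" "\<P> \<subseteq> sets lebesgue"
    using \<open>finite Q\<close> cover by (auto simp: \<P>_def)
  ultimately show thesis using that by blast
qed

lemma IET_measure_preserving:
  assumes "IET T"
  shows "measure_preserving_map (restrict_space lebesgue {0..<1}) T"
proof -
  have bij: "bij_betw T {0..<1} {0..<1}" using assms by (simp add: IET_def)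
  obtain \<P> where \<P>: "finite \<P>" "disjoint \<P>" "\<Union>\<P> = {0..<1}" "\<P> \<subseteq> sets lebesgue"
    and translation: "\<forall>I\<in>\<P>. \<exists>c. \<forall>x\<in>I. T x = c + x"
    using IET_piecewise_translation[OF assms] by blast
  note preserves = piecewise_translation_preserves_lebesgue[OF bij \<P> translation]
  let ?M = "restrict_space lebesgue {0..<1::real}"
  have sets_eq: "A \<in> sets ?M \<longleftrightarrow> A \<in> sets lebesgue \<and> A \<subseteq> {0..<1}" for A
    by (auto simp: sets_restrict_space_iff)
  have vimage_eq: "T -` A \<inter> space ?M = {x\<in>{0..<1}. T x \<in> A}" for A
    by auto
  have "T \<in> ?M \<rightarrow>\<^sub>M ?M"
  proof (rule measurableI)
    show "T x \<in> space ?M" if "x \<in> space ?M" for x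
      using bij_betwE[OF bij] that by simp
    show "T -` A \<inter> space ?M \<in> sets ?M" if "A \<in> sets ?M" for A
      unfolding vimage_eq sets_eq using preserves(1) that by (auto simp: sets_eq)
  qed
  moreover have "emeasure ?M (T -` A \<inter> space ?M) = emeasure ?M A" if "A \<in> sets ?M" for A
  proof -
    have A: "A \<in> sets lebesgue" "A \<subseteq> {0..<1}" using that by (simp_all add: sets_eq)
    have "emeasure ?M (T -` A \<inter> space ?M) = emeasure lebesgue {x\<in>{0..<1}. T x \<in> A}"
      unfolding vimage_eq by (rule emeasure_restrict_space) auto
    also have "\<dots> = emeasure lebesgue A" using preserves(2)[OF A] .
    also have "\<dots> = emeasure ?M A"
      using emeasure_restrict_space[of "{0..<1}" lebesgue A] A(2) by simp
    finally show ?thesis .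
  qed
  ultimately show ?thesis by (simp add: measure_preserving_map_def)
qed

theorem mainTheorem16:
  fixes E :: "real set" and T :: "real \<Rightarrow> real"
  assumes "E \<in> sets lebesgue" and "E \<subseteq> {0..<1}" and "emeasure lebesgue E > 0"
    and "IET T"
  shows "\<exists>x0\<in>{0..<1}. \<exists>\<alpha>::real. \<exists>\<beta>::real. \<alpha> > 0 \<and> \<beta> > 0 \<and>
           (\<forall>n::nat. n \<ge> 1 \<longrightarrow>
              real (card {i. i < n \<and> (T ^^ i) x0 \<in> E}) \<ge> \<alpha> * real n - \<beta>)"
proof -
  let ?M = "restrict_space lebesgue {0..<1::real}"
  interpret unit_interval: prob_space ?M
    by (rule prob_spaceI) (simp add: emeasure_restrict_space)
  have E: "E \<in> unit_interval.events" using assms(1,2) by (simp add: sets_restrict_space_iff)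
  have prob_E: "unit_interval.prob E = measure lebesgue E"
    using assms(2) by (simp add: measure_restrict_space)
  have "emeasure lebesgue E \<le> emeasure lebesgue {0..<1::real}"
    using assms(2) by (intro emeasure_mono) auto
  then have "emeasure lebesgue E < \<infinity>" by (simp add: le_less_trans)
  then have "measure lebesgue E > 0"
    using assms(3) by (simp add: measure_def enn2real_positive_iff)
  define \<alpha> where "\<alpha> = measure lebesgue E / 2"
  obtain x where "x \<in> {0..<1}" and x: "\<forall>n. \<alpha> * real n \<le> real (visits T E x n)"
    using unit_interval.exists_visits_ge_linear[OF IET_measure_preserving[OF assms(4)] E, of \<alpha>]
      \<open>measure lebesgue E > 0\<close> prob_E by (auto simp: \<alpha>_def)
  moreover have "\<alpha> > 0" using \<open>measure lebesgue E > 0\<close> by (simp add: \<alpha>_def)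
  moreover have "\<alpha> * real n - 1 \<le> real (card {i. i < n \<and> (T ^^ i) x \<in> E})" for n
    using x[rule_format, of n] unfolding visits_def by linarith
  ultimately show ?thesis using zero_less_one by blast
qed

end
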